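(* Let $\mathcal{C}$ be a $(2,1)$ binary convolutional code with polynomial generator matrix $(g_1(D)\ \ g_2(D))$, where $g_i(D)=\sum_{j=0}^{m}g_{i,j}D^j\in\mathbb{F}_2[D]$ and $m$ is the maximum degree of $g_1,g_2$. Then for every $k\ge m+1$, the $[2k,k]$ linear code $\mathcal{C}_{\mathrm{tb}}$ obtained from $\mathcal{C}$ by tailbiting is isodual.
   Context: Tailbiting: for $k\ge m+1$, let $\mathbf{g}=(g_{1,0},g_{2,0},g_{1,1},g_{2,1},\ldots,g_{1,m},g_{2,m},0,\ldots,0)\in\mathbb{F}_2^{2k}$. The tailbiting code $\mathcal{C}_{\mathrm{tb}}\subseteq\mathbb{F}_2^{2k}$ is the binary linear code generated by the $k\times 2k$ matrix whose $j$-th row ($j=0,\ldots,k-1$) is the cyclic shift of $\mathbf{g}$ to the right by $2j$ positions (so the last $m$ rows wrap around). A binary linear code $\mathcal{C}'$ of length $N$ is isodual if there is a permutation $\pi$ of the $N$ coordinates with $\mathcal{C}'=\pi(\mathcal{C}'^\perp)$, where $\mathcal{C}'^\perp$ is the dual code with respect to the standard inner product.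
   Formalization: The tailbiting code $\mathcal{C}_{\mathrm{tb}}$ has dimension k as an added hypothesis, so isoduality is claimed only when $\mathcal{C}_{\mathrm{tb}}$ is indeed a $[2k,k]$ code. The paper assumes this as well. *)

theory Defs
  imports "HOL-Library.Z2" "HOL-Computational_Algebra.Polynomial" "HOL-Combinatorics.Permutations"
begin

definition bvecs :: "nat \<Rightarrow> (nat \<Rightarrow> bit) set" where
  "bvecs N = {x. \<forall>i\<ge>N. x i = 0}"

definition dual_code :: "nat \<Rightarrow> (nat \<Rightarrow> bit) set \<Rightarrow> (nat \<Rightarrow> bit) set" where
  "dual_code N C = {y \<in> bvecs N. \<forall>x\<in>C. (\<Sum>i<N. x i * y i) = 0}"

definition perm_code :: "(nat \<Rightarrow> nat) \<Rightarrow> (nat \<Rightarrow> bit) set \<Rightarrow> (nat \<Rightarrow> bit) set" where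
  "perm_code \<pi> C = (\<lambda>x. x \<circ> inv \<pi>) ` C"

definition isodual :: "nat \<Rightarrow> (nat \<Rightarrow> bit) set \<Rightarrow> bool" where
  "isodual N C \<longleftrightarrow> (\<exists>\<pi>. \<pi> permutes {..<N} \<and> C = perm_code \<pi> (dual_code N C))"

text \<open>The vector g = (g_{1,0}, g_{2,0}, ..., g_{1,m}, g_{2,m}, 0, ..., 0) of length 2k.\<close>
definition tb_gvec :: "bit poly \<Rightarrow> bit poly \<Rightarrow> nat \<Rightarrow> nat \<Rightarrow> bit" where
  "tb_gvec g1 g2 k i =
     (let m = max (degree g1) (degree g2) in
      if i < 2 * k \<and> i div 2 \<le> m
      then (if even i then coeff g1 (i div 2) else coeff g2 (i div 2)) else 0)"

text \<open>Row j: cyclic shift of g to the right by 2j positions (within length 2k).\<close>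
definition tb_row :: "bit poly \<Rightarrow> bit poly \<Rightarrow> nat \<Rightarrow> nat \<Rightarrow> nat \<Rightarrow> bit" where
  "tb_row g1 g2 k j i =
     (if i < 2 * k then tb_gvec g1 g2 k ((i + 2 * k - (2 * j) mod (2 * k)) mod (2 * k)) else 0)"

definition tb_code :: "bit poly \<Rightarrow> bit poly \<Rightarrow> nat \<Rightarrow> (nat \<Rightarrow> bit) set" where
  "tb_code g1 g2 k = {(\<lambda>i. \<Sum>j<k. u j * tb_row g1 g2 k j i) | u. True}"

end

(*
  Write the rows of the generator matrix as r_j(2t) = g1(t - j) and r_j(2t + 1) = g2(t - j),
  all indices read modulo k.  Let sigma be the coordinate permutation that negates the pair
  index modulo k and swaps the two entries of each pair, so that r_j(sigma(2t)) = g2(-t - j)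
  and r_j(sigma(2t + 1)) = g1(-t - j).  Then
    <r_l, r_j o sigma> = sum_t g1(t - l) g2(-t - j) + sum_t g2(t - l) g1(-t - j),
  and the substitution t -> l - j - t carries the second sum onto the first, so the inner
  product is twice an element of F_2, i.e. 0.  Hence c o sigma lies in the dual code for every
  codeword c.  Counting with the characters (-1)^(x.y) gives |C| |C^perp| = 2^(2k), so
  |C| = 2^k forces C^perp = {c o sigma | c in C}.
*)
theory Submission
  imports Defs "HOL-Library.FuncSet"
begin

(* Keep + and * on bit as ring operations: Z2's simp rules rewrite them to XOR and AND,
   which the sum manipulations below cannot work with. *)
declare add_bit_eq_xor [simp del] mult_bit_eq_and [simp del]

lemma sum_eq_0_if_negating_involution:
  fixes f :: "'a \<Rightarrow> 'b::linordered_ab_group_add"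
  assumes "\<And>a. a \<in> A \<Longrightarrow> h a \<in> A" "\<And>a. a \<in> A \<Longrightarrow> h (h a) = a"
    and "\<And>a. a \<in> A \<Longrightarrow> f (h a) = - f a"
  shows "sum f A = 0"
proof -
  have "bij_betw h A A"
    by (rule bij_betw_byWitness[where f' = h]) (use assms in auto)
  then have "sum f A = sum (f \<circ> h) A"
    by (rule sum.reindex_bij_betw[symmetric, unfolded comp_def[symmetric]])
  also have "\<dots> = - sum f A"
    using assms(3) by (simp add: sum_negf)
  finally show ?thesis by simp
qed

lemma sum_lessThan_double:
  fixes f :: "nat \<Rightarrow> 'a::comm_monoid_add"
  shows "(\<Sum>i<2 * k. f i) = (\<Sum>t<k. f (2 * t) + f (2 * t + 1))"
  by (induction k) (simp_all add: ac_simps)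

lemma sum_reflect_periodic:
  fixes h :: "int \<Rightarrow> 'a::comm_monoid_add"
  assumes "\<And>z. h (z mod int k) = h z"
  shows "(\<Sum>t<k. h (c - int t)) = (\<Sum>t<k. h (int t))"
  by (rule sum.reindex_bij_witness[where i = "\<lambda>t. nat ((c - int t) mod int k)"
                                     and j = "\<lambda>t. nat ((c - int t) mod int k)"])
    (auto simp: nat_less_iff mod_diff_right_eq assms)

lemma double_add_mod_double:
  fixes x K :: int
  assumes "0 \<le> K" "b < 2"
  shows "(2 * x + int b) mod (2 * K) = 2 * (x mod K) + int b"
  using assms by (auto simp: zmod_zmult2_eq less_2_cases_iff)

definition bit_dot :: "nat \<Rightarrow> (nat \<Rightarrow> bit) \<Rightarrow> (nat \<Rightarrow> bit) \<Rightarrow> bit" where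
  "bit_dot N x y = (\<Sum>i<N. x i * y i)"

lemma dual_code_eq: "dual_code N C = {y \<in> bvecs N. \<forall>x\<in>C. bit_dot N x y = 0}"
  unfolding dual_code_def bit_dot_def ..

lemma bit_dot_0_right: "bit_dot N x (\<lambda>_. 0) = 0"
  by (simp add: bit_dot_def)

definition linear_code :: "nat \<Rightarrow> (nat \<Rightarrow> bit) set \<Rightarrow> bool" where
  "linear_code N C \<longleftrightarrow> C \<subseteq> bvecs N \<and> (\<lambda>_. 0) \<in> C \<and> (\<forall>x\<in>C. \<forall>y\<in>C. (\<lambda>i. x i + y i) \<in> C)"

lemma linear_code_bvecs: "linear_code N (bvecs N)"
  unfolding linear_code_def bvecs_def by auto

lemma linear_code_span:
  assumes "\<And>j. j < k \<Longrightarrow> r j \<in> bvecs N"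
  shows "linear_code N {(\<lambda>i. \<Sum>j<k. u j * r j i) | u. True}"
  unfolding linear_code_def
proof (intro conjI ballI subsetI)
  fix x assume "x \<in> {(\<lambda>i. \<Sum>j<k. u j * r j i) | u. True}"
  then show "x \<in> bvecs N"
    using assms by (auto simp: bvecs_def)
next
  show "(\<lambda>_. 0) \<in> {(\<lambda>i. \<Sum>j<k. u j * r j i) | u. True}"
    by (rule CollectI, rule exI[of _ "\<lambda>_. 0"]) simp
next
  fix x y assume "x \<in> {(\<lambda>i. \<Sum>j<k. u j * r j i) | u. True}" "y \<in> {(\<lambda>i. \<Sum>j<k. u j * r j i) | u. True}"
  then obtain u v where "x = (\<lambda>i. \<Sum>j<k. u j * r j i)" "y = (\<lambda>i. \<Sum>j<k. v j * r j i)"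
    by blast
  then show "(\<lambda>i. x i + y i) \<in> {(\<lambda>i. \<Sum>j<k. u j * r j i) | u. True}"
    by (intro CollectI exI[of _ "\<lambda>j. u j + v j"]) (simp add: distrib_right sum.distrib)
qed

lemma bit_dot_span_eq_0:
  assumes "\<And>l j. l < k \<Longrightarrow> j < k \<Longrightarrow> bit_dot N (r l) (r j \<circ> \<pi>) = 0"
  shows "bit_dot N (\<lambda>i. \<Sum>l<k. u l * r l i) ((\<lambda>i. \<Sum>j<k. w j * r j i) \<circ> \<pi>) = 0"
proof -
  have "bit_dot N (\<lambda>i. \<Sum>l<k. u l * r l i) ((\<lambda>i. \<Sum>j<k. w j * r j i) \<circ> \<pi>)
      = (\<Sum>i<N. \<Sum>l<k. \<Sum>j<k. u l * w j * (r l i * r j (\<pi> i)))"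
    unfolding bit_dot_def comp_def sum_product by (simp add: ac_simps)
  also have "\<dots> = (\<Sum>l<k. \<Sum>j<k. u l * w j * bit_dot N (r l) (r j \<circ> \<pi>))"
    unfolding bit_dot_def comp_def sum_distrib_left
    by (subst sum.swap) (simp add: sum.swap[of _ "{..<N}"])
  also have "\<dots> = 0"
    by (simp add: assms)
  finally show ?thesis .
qed

lemma card_bvecs: "card (bvecs N) = 2 ^ N"
proof -
  have UNIV_bit: "(UNIV :: bit set) = {0, 1}"
    using bit.exhaust by auto
  have "bij_betw (\<lambda>x. restrict x {..<N}) (bvecs N) ({..<N} \<rightarrow>\<^sub>E (UNIV :: bit set))"
    by (rule bij_betw_byWitness[where f' = "\<lambda>y i. if i < N then y i else 0"])
      (auto simp: bvecs_def fun_eq_iff PiE_def extensional_def)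
  then have "card (bvecs N) = card ({..<N} \<rightarrow>\<^sub>E (UNIV :: bit set))"
    by (rule bij_betw_same_card)
  also have "\<dots> = 2 ^ N"
    by (simp add: card_funcsetE UNIV_bit numeral_2_eq_2)
  finally show ?thesis .
qed

lemma finite_bvecs: "finite (bvecs N)"
  using card_bvecs by (intro card_ge_0_finite) simp

lemma bvecs_orthogonal_eq_0:
  assumes "y \<in> bvecs N" and "\<And>x. x \<in> bvecs N \<Longrightarrow> bit_dot N x y = 0"
  shows "y = (\<lambda>_. 0)"
proof
  fix i
  show "y i = 0"
  proof (cases "i < N")
    case True
    have "bit_dot N (\<lambda>j. of_bool (j = i)) y = y i"
      using True by (simp add: bit_dot_def)
    moreover have "(\<lambda>j. of_bool (j = i)) \<in> bvecs N"
      using True by (simp add: bvecs_def)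
    ultimately show ?thesis using assms(2) by metis
  qed (use assms(1) in \<open>simp add: bvecs_def\<close>)
qed

definition bit_sign :: "bit \<Rightarrow> int" where
  "bit_sign b = (if b = 0 then 1 else -1)"

lemma bit_sign_add: "bit_sign (a + b) = bit_sign a * bit_sign b"
  by (cases a; cases b) (simp_all add: bit_sign_def)

lemma sum_bit_sign_dot:
  assumes "linear_code N C"
  shows "(\<Sum>x\<in>C. bit_sign (bit_dot N x y)) = (if \<forall>x\<in>C. bit_dot N x y = 0 then int (card C) else 0)"
proof (cases "\<forall>x\<in>C. bit_dot N x y = 0")
  case True
  then show ?thesis by (simp add: bit_sign_def)
next
  case False
  then obtain x0 where x0: "x0 \<in> C" "bit_dot N x0 y = 1" by auto
  have dot_add: "bit_dot N (\<lambda>i. x i + x0 i) y = bit_dot N x y + 1" for x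
    using x0(2) by (simp add: bit_dot_def distrib_right sum.distrib)
  have "(\<Sum>x\<in>C. bit_sign (bit_dot N x y)) = 0"
    by (rule sum_eq_0_if_negating_involution[where h = "\<lambda>x i. x i + x0 i"])
      (use assms x0 in \<open>auto simp: linear_code_def dot_add bit_sign_add add.assoc bit_sign_def\<close>)
  then show ?thesis using False x0 by auto
qed

lemma card_mult_card_dual_code:
  assumes "linear_code N C"
  shows "card C * card (dual_code N C) = 2 ^ N"
proof -
  let ?V = "bvecs N" and ?D = "dual_code N C"
  let ?s = "\<lambda>x y. bit_sign (bit_dot N x y)"
  have C: "C \<subseteq> ?V" "(\<lambda>_. 0) \<in> C" "finite C"
    using assms finite_bvecs finite_subset unfolding linear_code_def by blast+
  have "?D \<subseteq> ?V"
    by (auto simp: dual_code_def)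
  then have "int (card C) * int (card ?D) = (\<Sum>y\<in>?V. if y \<in> ?D then int (card C) else 0)"
    by (simp add: sum.If_cases finite_bvecs Int_absorb1)
  also have "\<dots> = (\<Sum>y\<in>?V. \<Sum>x\<in>C. ?s x y)"
    by (intro sum.cong) (auto simp: sum_bit_sign_dot[OF assms] dual_code_eq)
  also have "\<dots> = (\<Sum>x\<in>C. \<Sum>y\<in>?V. ?s y x)"
    by (subst sum.swap) (simp add: bit_dot_def mult.commute)
  also have "\<dots> = (\<Sum>x\<in>C. if x = (\<lambda>_. 0) then 2 ^ N else 0)"
    using C(1) by (intro sum.cong)
      (auto simp: sum_bit_sign_dot[OF linear_code_bvecs] card_bvecs bit_dot_0_right
        dest: bvecs_orthogonal_eq_0)
  also have "\<dots> = 2 ^ N"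
    using C by simp
  finally show ?thesis
    by (metis of_nat_eq_iff of_nat_mult of_nat_numeral of_nat_power)
qed

lemma isodualI:
  assumes C: "linear_code N C" and card: "card C * card C = 2 ^ N"
    and \<pi>: "\<pi> permutes {..<N}"
    and orth: "\<And>x c. x \<in> C \<Longrightarrow> c \<in> C \<Longrightarrow> bit_dot N x (c \<circ> \<pi>) = 0"
  shows "isodual N C"
proof -
  let ?D = "dual_code N C"
  have "C \<subseteq> bvecs N" "(\<lambda>_. 0) \<in> C" "finite C"
    using C finite_bvecs finite_subset unfolding linear_code_def by blast+
  have "C \<subseteq> perm_code \<pi> ?D"
  proof
    fix c assume "c \<in> C"
    then have "c \<circ> \<pi> \<in> bvecs N"
      using \<open>C \<subseteq> bvecs N\<close> permutes_not_in[OF \<pi>] by (auto simp: bvecs_def)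
    then have "c \<circ> \<pi> \<in> ?D"
      using orth \<open>c \<in> C\<close> by (simp add: dual_code_eq)
    moreover have "c = (c \<circ> \<pi>) \<circ> inv \<pi>"
      using permutes_inverses(1)[OF \<pi>] by (simp add: fun_eq_iff)
    ultimately show "c \<in> perm_code \<pi> ?D"
      unfolding perm_code_def by blast
  qed
  moreover have "card C > 0"
    using \<open>finite C\<close> \<open>(\<lambda>_. 0) \<in> C\<close> card_gt_0_iff by blast
  then have "card ?D = card C"
    using card_mult_card_dual_code[OF C] card by (metis nat_mult_eq_cancel1)
  moreover have "finite ?D"
    by (rule finite_subset[OF _ finite_bvecs]) (auto simp: dual_code_def)
  then have "finite (perm_code \<pi> ?D)" "card (perm_code \<pi> ?D) \<le> card ?D"
    unfolding perm_code_def by (simp_all add: card_image_le)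
  ultimately have "C = perm_code \<pi> ?D"
    by (metis card_mono card_subset_eq le_antisym)
  then show ?thesis
    unfolding isodual_def using \<pi> by blast
qed

definition cyc_coeff :: "bit poly \<Rightarrow> nat \<Rightarrow> int \<Rightarrow> bit" where
  "cyc_coeff g k z = coeff g (nat (z mod int k))"

lemma cyc_coeff_cong: "a mod int k = b mod int k \<Longrightarrow> cyc_coeff g k a = cyc_coeff g k b"
  by (simp add: cyc_coeff_def)

lemma tb_gvec_pair:
  assumes "d < k"
  shows "tb_gvec g1 g2 k (2 * d) = coeff g1 d" and "tb_gvec g1 g2 k (2 * d + 1) = coeff g2 d"
  using assms by (auto simp: tb_gvec_def Let_def coeff_eq_0)

lemma tb_row_index:
  fixes t j k b :: nat
  assumes "t < k" "b < 2"
  shows "(2 * t + b + 2 * k - (2 * j) mod (2 * k)) mod (2 * k) = 2 * nat ((int t - int j) mod int k) + b"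
proof -
  have "j mod k < k" using assms by simp
  then have "int ((2 * t + b + 2 * k - (2 * j) mod (2 * k)) mod (2 * k))
      = (2 * int t + int b + 2 * int k - 2 * (int j mod int k)) mod (2 * int k)"
    by (simp add: of_nat_diff zmod_int)
  also have "\<dots> = (2 * (int t - int j) + int b) mod (2 * int k)"
  proof -
    have "2 * int t + int b + 2 * int k - 2 * (int j mod int k)
        = (2 * (int t - int j) + int b) + (1 + int j div int k) * (2 * int k)"
      by (simp add: algebra_simps minus_div_mult_eq_mod[symmetric])
    then show ?thesis
      by (simp only: mod_mult_self1)
  qed
  also have "\<dots> = 2 * ((int t - int j) mod int k) + int b"
    using assms(2) by (rule double_add_mod_double[OF of_nat_0_le_iff])
  finally show ?thesis using assms by simp
qed

lemma tb_row_pair: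
  assumes "t < k"
  shows "tb_row g1 g2 k j (2 * t) = cyc_coeff g1 k (int t - int j)"
    and "tb_row g1 g2 k j (2 * t + 1) = cyc_coeff g2 k (int t - int j)"
proof -
  have "nat ((int t - int j) mod int k) < k"
    using assms by (simp add: nat_less_iff)
  then show "tb_row g1 g2 k j (2 * t) = cyc_coeff g1 k (int t - int j)"
    and "tb_row g1 g2 k j (2 * t + 1) = cyc_coeff g2 k (int t - int j)"
    using assms tb_row_index[OF assms, of 0 j] tb_row_index[OF assms, of 1 j] tb_gvec_pair
    by (simp_all add: tb_row_def cyc_coeff_def)
qed

definition tb_perm :: "nat \<Rightarrow> nat \<Rightarrow> nat" where
  "tb_perm k i =
     (if i < 2 * k then 2 * nat ((- int (i div 2)) mod int k) + (if even i then 1 else 0) else i)"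

lemma tb_perm_pair:
  assumes "t < k"
  shows "tb_perm k (2 * t) = 2 * nat ((- int t) mod int k) + 1"
    and "tb_perm k (2 * t + 1) = 2 * nat ((- int t) mod int k)"
  using assms by (simp_all add: tb_perm_def)

lemma tb_perm_involution: "tb_perm k (tb_perm k i) = i"
proof (cases "i < 2 * k")
  case True
  define t where "t = i div 2"
  define d where "d = nat ((- int t) mod int k)"
  have "t < k" "d < k"
    using True by (auto simp: t_def d_def nat_less_iff)
  have "nat ((- int d) mod int k) = t"
    using \<open>t < k\<close> by (simp add: d_def mod_minus_eq nat_mod_as_int)
  then show ?thesis
    using \<open>t < k\<close> \<open>d < k\<close> tb_perm_pair[of t k] tb_perm_pair[of d k]
    by (cases "even i") (auto simp: t_def d_def elim: evenE oddE)
qed (simp add: tb_perm_def)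

lemma tb_perm_permutes: "tb_perm k permutes {..<2 * k}"
  unfolding permutes_def by (metis lessThan_iff tb_perm_def tb_perm_involution)

lemma tb_row_perm:
  assumes "t < k"
  shows "tb_row g1 g2 k j (tb_perm k (2 * t)) = cyc_coeff g2 k (- int t - int j)"
    and "tb_row g1 g2 k j (tb_perm k (2 * t + 1)) = cyc_coeff g1 k (- int t - int j)"
proof -
  define d where "d = nat ((- int t) mod int k)"
  have "d < k" "int d = (- int t) mod int k"
    using assms by (auto simp: d_def nat_less_iff)
  then have "cyc_coeff g k (int d - int j) = cyc_coeff g k (- int t - int j)" for g
    by (simp add: cyc_coeff_def mod_diff_left_eq)
  then show "tb_row g1 g2 k j (tb_perm k (2 * t)) = cyc_coeff g2 k (- int t - int j)"
    and "tb_row g1 g2 k j (tb_perm k (2 * t + 1)) = cyc_coeff g1 k (- int t - int j)"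
    using tb_perm_pair[OF assms] tb_row_pair[OF \<open>d < k\<close>] by (simp_all flip: d_def)
qed

lemma tb_row_dot_perm: "bit_dot (2 * k) (tb_row g1 g2 k l) (tb_row g1 g2 k j \<circ> tb_perm k) = 0"
proof -
  let ?S = "\<Sum>t<k. cyc_coeff g1 k (int t - int l) * cyc_coeff g2 k (- int t - int j)"
  define h where "h z = cyc_coeff g2 k (z - int l) * cyc_coeff g1 k (- z - int j)" for z
  have "bit_dot (2 * k) (tb_row g1 g2 k l) (tb_row g1 g2 k j \<circ> tb_perm k) = ?S + (\<Sum>t<k. h (int t))"
    unfolding bit_dot_def sum_lessThan_double sum.distrib[symmetric] h_def
    by (intro sum.cong refl) (use tb_row_pair tb_row_perm in simp)
  also have "(\<Sum>t<k. h (int t)) = (\<Sum>t<k. h (int l - int j - int t))"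
  proof (rule sum_reflect_periodic[symmetric])
    fix z
    have "(z mod int k - int l) mod int k = (z - int l) mod int k"
      and "(- (z mod int k) - int j) mod int k = (- z - int j) mod int k"
      by (simp add: mod_diff_left_eq) (metis mod_diff_left_eq mod_minus_eq)
    then show "h (z mod int k) = h z"
      unfolding h_def by (metis cyc_coeff_cong)
  qed
  also have "\<dots> = ?S"
    by (simp add: h_def mult.commute add.commute)
  also have "?S + ?S = 0"
    by (cases ?S) simp_all
  finally show ?thesis .
qed

theorem proposition2:
  fixes g1 g2 :: "bit poly" and k :: nat
  assumes "k \<ge> max (degree g1) (degree g2) + 1"
    and "card (tb_code g1 g2 k) = 2 ^ k"
  shows "isodual (2 * k) (tb_code g1 g2 k)"
proof (rule isodualI[OF _ _ tb_perm_permutes])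
  show "linear_code (2 * k) (tb_code g1 g2 k)"
    unfolding tb_code_def by (rule linear_code_span) (simp add: tb_row_def bvecs_def)
  show "card (tb_code g1 g2 k) * card (tb_code g1 g2 k) = 2 ^ (2 * k)"
    using assms(2) by (simp add: mult_2 power_add)
  show "bit_dot (2 * k) x (c \<circ> tb_perm k) = 0" if "x \<in> tb_code g1 g2 k" "c \<in> tb_code g1 g2 k" for x c
    using that unfolding tb_code_def by (auto intro: bit_dot_span_eq_0 tb_row_dot_perm)
qed

end
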